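(* Let $P$ be any school choice problem, where $S$ includes the null school $s_\emptyset$ and $n=|S|$. Let $i\in I$. If either (i) $i$ is assigned under $\mathrm{DA}(P)$ to his least preferred school in $S$ (the school of rank $n$ in $\succ_i$) and at least one school is under-demanded, or (ii) $\mathrm{DA}_i(P)=s_\emptyset$, then $i$ is unimprovable.
   Context: A school choice problem $P$ consists of a finite set of students $I$, a finite set of schools $S$ containing a null school $s_\emptyset$ with unlimited capacity (quota at least $|I|$), for each student $i$ a strict preference $\succ_i$ over all of $S$, and for each school $s$ a quota $q_s$ and a strict priority order $\triangleright_s$ over $I$. A matching $\mu:I\to S$ assigns at most $q_s$ students to each school $s$; a student with $\mu_i=s_\emptyset$ is unassigned. Matching $\mu$ weakly Pareto-dominates $\nu$ if every student weakly prefers $\mu_i$ to $\nu_i$; it Pareto-dominates $\nu$ if in addition some student strictly prefers $\mu_j$ to $\nu_j$; a matching is Pareto-efficient if no matching Pareto-dominates it. $\mathrm{DA}(P)$ is the matching produced by student-proposing deferred acceptance: in each round, every student not tentatively held applies to her most preferred school that has not yet rejected her; each school tentatively holds the highest-priority applicants up to its quota and rejects the rest; stop when a round has no new rejection. Let $\mathcal M(P)$ be the set of Pareto-efficient matchings that weakly Pareto-dominate $\mathrm{DA}(P)$. A student $i$ is unimprovable if $\mu_i=\mathrm{DA}_i(P)$ for every $\mu\in\mathcal M(P)$. A school $s$ is under-demanded if no student strictly prefers $s$ to her DA assignment (equivalently, $s$ rejects no student during DA). *)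

theory Defs
  imports Main
begin

text \<open>A school choice problem. pref i a b means: student i strictly prefers school a to b.
  prio s j k means: student j has strictly higher priority than k at school s.\<close>
record ('i, 's) problem =
  students :: "'i set"
  schools  :: "'s set"
  null     :: 's
  pref     :: "'i \<Rightarrow> 's \<Rightarrow> 's \<Rightarrow> bool"
  quota    :: "'s \<Rightarrow> nat"
  prio     :: "'s \<Rightarrow> 'i \<Rightarrow> 'i \<Rightarrow> bool"

definition strict_total_on :: "'a set \<Rightarrow> ('a \<Rightarrow> 'a \<Rightarrow> bool) \<Rightarrow> bool" where
  "strict_total_on A r \<longleftrightarrow>
     (\<forall>x\<in>A. \<not> r x x) \<and>
     (\<forall>x\<in>A. \<forall>y\<in>A. \<forall>z\<in>A. r x y \<longrightarrow> r y z \<longrightarrow> r x z) \<and>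
     (\<forall>x\<in>A. \<forall>y\<in>A. x \<noteq> y \<longrightarrow> r x y \<or> r y x)"

definition wf_problem :: "('i, 's) problem \<Rightarrow> bool" where
  "wf_problem P \<longleftrightarrow>
     finite (students P) \<and> finite (schools P) \<and>
     null P \<in> schools P \<and> quota P (null P) \<ge> card (students P) \<and>
     (\<forall>i\<in>students P. strict_total_on (schools P) (pref P i)) \<and>
     (\<forall>s\<in>schools P. strict_total_on (students P) (prio P s))"

definition is_matching :: "('i, 's) problem \<Rightarrow> ('i \<Rightarrow> 's) \<Rightarrow> bool" where
  "is_matching P \<mu> \<longleftrightarrow>
     (\<forall>i\<in>students P. \<mu> i \<in> schools P) \<and>
     (\<forall>s\<in>schools P. card {i\<in>students P. \<mu> i = s} \<le> quota P s)"

text \<open>State of DA: for each student, the set of schools that have rejected her so far.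
  Every student (tentatively held or not) applies to her most preferred school that has not
  rejected her; a held student thereby re-applies to the school holding her, so this is the
  standard formulation.\<close>

definition choice :: "('i, 's) problem \<Rightarrow> ('i \<Rightarrow> 's set) \<Rightarrow> 'i \<Rightarrow> 's" where
  "choice P R i = (THE s. s \<in> schools P - R i \<and>
                      (\<forall>t\<in>schools P - R i. t \<noteq> s \<longrightarrow> pref P i s t))"

definition applicants :: "('i, 's) problem \<Rightarrow> ('i \<Rightarrow> 's set) \<Rightarrow> 's \<Rightarrow> 'i set" where
  "applicants P R s = {i\<in>students P. choice P R i = s}"

definition rejected :: "('i, 's) problem \<Rightarrow> ('i \<Rightarrow> 's set) \<Rightarrow> 'i \<Rightarrow> bool" where
  "rejected P R i \<longleftrightarrow> i \<in> students P \<and>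
     (let s = choice P R i in
        card {j\<in>applicants P R s. prio P s j i} \<ge> quota P s)"

definition da_round :: "('i, 's) problem \<Rightarrow> ('i \<Rightarrow> 's set) \<Rightarrow> ('i \<Rightarrow> 's set)" where
  "da_round P R = (\<lambda>i. if rejected P R i then insert (choice P R i) (R i) else R i)"

text \<open>Each round either adds a new rejection (a student-school pair, at most
  card I * card S of them) or changes nothing (the stopping round); hence running
  card I * card S + 1 rounds reaches the terminal state, after which rounds are idle.\<close>
definition da_rejections :: "('i, 's) problem \<Rightarrow> ('i \<Rightarrow> 's set)" where
  "da_rejections P =
     (da_round P ^^ (card (students P) * card (schools P) + 1)) (\<lambda>_. {})"

definition DA :: "('i, 's) problem \<Rightarrow> 'i \<Rightarrow> 's" where
  "DA P = choice P (da_rejections P)"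

definition weakly_dominates :: "('i, 's) problem \<Rightarrow> ('i \<Rightarrow> 's) \<Rightarrow> ('i \<Rightarrow> 's) \<Rightarrow> bool" where
  "weakly_dominates P \<mu> \<nu> \<longleftrightarrow> (\<forall>i\<in>students P. \<mu> i = \<nu> i \<or> pref P i (\<mu> i) (\<nu> i))"

definition dominates :: "('i, 's) problem \<Rightarrow> ('i \<Rightarrow> 's) \<Rightarrow> ('i \<Rightarrow> 's) \<Rightarrow> bool" where
  "dominates P \<mu> \<nu> \<longleftrightarrow> weakly_dominates P \<mu> \<nu> \<and> (\<exists>j\<in>students P. pref P j (\<mu> j) (\<nu> j))"

definition pareto_efficient :: "('i, 's) problem \<Rightarrow> ('i \<Rightarrow> 's) \<Rightarrow> bool" where
  "pareto_efficient P \<mu> \<longleftrightarrow> is_matching P \<mu> \<and> \<not> (\<exists>\<nu>. is_matching P \<nu> \<and> dominates P \<nu> \<mu>)"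

definition M :: "('i, 's) problem \<Rightarrow> ('i \<Rightarrow> 's) set" where
  "M P = {\<mu>. pareto_efficient P \<mu> \<and> weakly_dominates P \<mu> (DA P)}"

definition unimprovable :: "('i, 's) problem \<Rightarrow> 'i \<Rightarrow> bool" where
  "unimprovable P i \<longleftrightarrow> (\<forall>\<mu>\<in>M P. \<mu> i = DA P i)"

definition under_demanded :: "('i, 's) problem \<Rightarrow> 's \<Rightarrow> bool" where
  "under_demanded P s \<longleftrightarrow> s \<in> schools P \<and> (\<forall>i\<in>students P. \<not> pref P i s (DA P i))"

definition least_preferred :: "('i, 's) problem \<Rightarrow> 'i \<Rightarrow> 's \<Rightarrow> bool" where
  "least_preferred P i s \<longleftrightarrow> s \<in> schools P \<and> (\<forall>t\<in>schools P. t \<noteq> s \<longrightarrow> pref P i t s)"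

end

theory Submission
  imports Defs
begin

text \<open>Call a school over-demanded if some student strictly prefers it to her DA assignment.
  Such a school has rejected someone, and a school that has rejected a student keeps at least
  its quota of applicants for the rest of DA; so every over-demanded school is filled to capacity
  by DA. Now let \<mu> be a matching that weakly dominates DA. Every student whom \<mu> moves moves to a
  strictly preferred, hence over-demanded, school. Counting seats at over-demanded schools, \<mu>
  cannot place there more students than DA does, so \<mu> only moves students whose DA school is
  itself over-demanded. The null school is never over-demanded, since its quota leaves room for
  everybody; and if i holds her least preferred school, any under-demanded school must be that
  very school, since she prefers every other one to it.\<close>

lemma strict_total_on_subset: "strict_total_on A r \<Longrightarrow> B \<subseteq> A \<Longrightarrow> strict_total_on B r"
  unfolding strict_total_on_def by blast

lemma strict_total_on_has_greatest:
  assumes "strict_total_on A r" "finite X" "X \<noteq> {}" "X \<subseteq> A"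
  shows "\<exists>x\<in>X. \<forall>y\<in>X. y \<noteq> x \<longrightarrow> r x y"
  using assms(2,3,4)
proof (induction X rule: finite_ne_induct)
  case (singleton x)
  then show ?case by auto
next
  case (insert a X)
  then obtain x where x: "x \<in> X" "\<forall>y\<in>X. y \<noteq> x \<longrightarrow> r x y" by auto
  have "a \<in> A" "X \<subseteq> A" "a \<noteq> x" using insert x by auto
  then have "r a x \<or> r x a" and "\<And>y. y \<in> X \<Longrightarrow> r a x \<Longrightarrow> r x y \<Longrightarrow> r a y"
    using assms(1) x unfolding strict_total_on_def by blast+
  then show ?case
    using x by (metis insert_iff)
qed

lemma card_low_rank_ge:
  assumes st: "strict_total_on A r" and fin: "finite A" and q: "q \<le> card A"
  shows "q \<le> card {a\<in>A. card {b\<in>A. r b a} < q}"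
proof -
  define rank where "rank a = card {b\<in>A. r b a}" for a
  have rank_less: "rank a < rank a'" if "a \<in> A" "a' \<in> A" "r a a'" for a a'
  proof -
    have "{b\<in>A. r b a} \<subset> {b\<in>A. r b a'}"
      using st that unfolding strict_total_on_def by blast
    then show ?thesis unfolding rank_def using fin by (simp add: psubset_card_mono)
  qed
  have "inj_on rank A"
  proof (rule inj_onI)
    fix a a' assume "a \<in> A" "a' \<in> A" "rank a = rank a'"
    then show "a = a'"
      using rank_less st unfolding strict_total_on_def by (metis less_irrefl)
  qed
  moreover have "rank ` A \<subseteq> {..<card A}"
  proof
    fix y assume "y \<in> rank ` A"
    then obtain a where a: "a \<in> A" "y = rank a" by auto
    have "{b\<in>A. r b a} \<subset> A" using a st unfolding strict_total_on_def by blast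
    then show "y \<in> {..<card A}" using a fin unfolding rank_def by (simp add: psubset_card_mono)
  qed
  ultimately have "rank ` A = {..<card A}"
    by (simp add: card_image card_subset_eq)
  then have "{..<q} \<subseteq> rank ` {a\<in>A. rank a < q}"
    using q by (auto simp: image_iff)
  then have "card {..<q} \<le> card (rank ` {a\<in>A. rank a < q})"
    using fin by (intro card_mono) auto
  then have "q \<le> card (rank ` {a\<in>A. rank a < q})"
    by simp
  also have "\<dots> \<le> card {a\<in>A. rank a < q}"
    using fin by (simp add: card_image_le)
  finally show ?thesis unfolding rank_def .
qed

lemma card_preimage_eq_sum:
  assumes "finite I" "finite F"
  shows "card {j\<in>I. g j \<in> F} = (\<Sum>s\<in>F. card {j\<in>I. g j = s})"
proof -
  have "{j\<in>I. g j \<in> F} = (\<Union>s\<in>F. {j\<in>I. g j = s})" by auto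
  also have "card \<dots> = (\<Sum>s\<in>F. card {j\<in>I. g j = s})"
    by (rule card_UN_disjoint) (use assms in auto)
  finally show ?thesis .
qed

lemma choice_is_best:
  assumes wf: "wf_problem P" and i: "i \<in> students P" and "null P \<notin> R i"
  shows "choice P R i \<in> schools P - R i \<and>
         (\<forall>t\<in>schools P - R i. t \<noteq> choice P R i \<longrightarrow> pref P i (choice P R i) t)"
proof -
  have st: "strict_total_on (schools P) (pref P i)" using wf i unfolding wf_problem_def by auto
  have "finite (schools P - R i)" "schools P - R i \<noteq> {}"
    using wf assms(3) unfolding wf_problem_def by auto
  then obtain x where x: "x \<in> schools P - R i" "\<forall>y\<in>schools P - R i. y \<noteq> x \<longrightarrow> pref P i x y"
    using strict_total_on_has_greatest[OF st] by blast
  have "\<exists>!s. s \<in> schools P - R i \<and> (\<forall>t\<in>schools P - R i. t \<noteq> s \<longrightarrow> pref P i s t)"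
    using x st unfolding strict_total_on_def by (intro ex1I[of _ x]) (blast, metis DiffD1)
  from theI'[OF this] show ?thesis unfolding choice_def .
qed

definition da_invariant :: "('i, 's) problem \<Rightarrow> ('i \<Rightarrow> 's set) \<Rightarrow> bool" where
  "da_invariant P R \<longleftrightarrow> (\<forall>k. R k \<subseteq> schools P) \<and> (\<forall>k. null P \<notin> R k) \<and>
     (\<forall>s. (\<exists>k. s \<in> R k) \<longrightarrow> quota P s \<le> card (applicants P R s))"

lemma rejected_not_by_null:
  assumes wf: "wf_problem P" and rej: "rejected P R k"
  shows "choice P R k \<noteq> null P"
proof
  assume null: "choice P R k = null P"
  have k: "k \<in> students P" using rej unfolding rejected_def by simp
  have "strict_total_on (students P) (prio P (null P))"
    using wf unfolding wf_problem_def by blast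
  then have "\<not> prio P (null P) k k"
    using k unfolding strict_total_on_def by blast
  then have "{j\<in>applicants P R (null P). prio P (null P) j k} \<subseteq> students P - {k}"
    unfolding applicants_def by auto
  moreover have fin: "finite (students P)"
    using wf unfolding wf_problem_def by simp
  ultimately have "card {j\<in>applicants P R (null P). prio P (null P) j k} \<le> card (students P - {k})"
    by (intro card_mono) auto
  also have "\<dots> < card (students P)"
    using fin k by (rule card_Diff1_less)
  finally have "card {j\<in>applicants P R (null P). prio P (null P) j k} < card (students P)" .
  moreover have "quota P (null P) \<le> card {j\<in>applicants P R (null P). prio P (null P) j k}"
    using rej null unfolding rejected_def Let_def by simp
  ultimately show False using wf unfolding wf_problem_def by linarith
qed

text \<open>The quota-many top-priority applicants of s are not rejected, so they apply to s again.\<close>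
lemma quota_le_applicants_da_round:
  assumes wf: "wf_problem P" and s: "s \<in> schools P"
    and q: "quota P s \<le> card (applicants P R s)"
  shows "quota P s \<le> card (applicants P (da_round P R) s)"
proof -
  let ?A = "applicants P R s"
  have fin: "finite ?A" using wf unfolding wf_problem_def applicants_def by auto
  have "strict_total_on ?A (prio P s)"
    using wf s unfolding wf_problem_def applicants_def
    by (blast intro: strict_total_on_subset)
  then have "quota P s \<le> card {a\<in>?A. card {b\<in>?A. prio P s b a} < quota P s}"
    using card_low_rank_ge fin q by blast
  also have "\<dots> \<le> card (applicants P (da_round P R) s)"
  proof (rule card_mono)
    show "finite (applicants P (da_round P R) s)"
      using wf unfolding wf_problem_def applicants_def by auto
    show "{a\<in>?A. card {b\<in>?A. prio P s b a} < quota P s} \<subseteq> applicants P (da_round P R) s"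
    proof
      fix a assume a: "a \<in> {a\<in>?A. card {b\<in>?A. prio P s b a} < quota P s}"
      then have "\<not> rejected P R a" unfolding rejected_def applicants_def Let_def by auto
      then have "da_round P R a = R a" unfolding da_round_def by simp
      then show "a \<in> applicants P (da_round P R) s"
        using a unfolding applicants_def choice_def by simp
    qed
  qed
  finally show ?thesis .
qed

lemma da_round_invariant:
  assumes wf: "wf_problem P" and inv: "da_invariant P R"
  shows "da_invariant P (da_round P R)"
proof -
  have R_sub: "\<And>k. R k \<subseteq> schools P" and null: "\<And>k. null P \<notin> R k"
    and full: "\<And>s k. s \<in> R k \<Longrightarrow> quota P s \<le> card (applicants P R s)"
    using inv unfolding da_invariant_def by blast+
  have choice_in: "choice P R k \<in> schools P" if "rejected P R k" for k
    using choice_is_best[of P k R] wf null that unfolding rejected_def by blast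
  have full_before: "s \<in> schools P \<and> quota P s \<le> card (applicants P R s)"
    if "s \<in> da_round P R k" for s k
  proof (cases "s \<in> R k")
    case True
    then show ?thesis using R_sub full by blast
  next
    case False
    then have rej: "rejected P R k" and s: "s = choice P R k"
      using that unfolding da_round_def by (auto split: if_splits)
    have "quota P s \<le> card {j\<in>applicants P R s. prio P s j k}"
      using rej s unfolding rejected_def Let_def by simp
    also have "\<dots> \<le> card (applicants P R s)"
      using wf unfolding wf_problem_def applicants_def by (intro card_mono) auto
    finally show ?thesis using choice_in rej s by blast
  qed
  show ?thesis
    unfolding da_invariant_def
  proof (intro conjI allI impI)
    show "da_round P R k \<subseteq> schools P" for k
      using R_sub choice_in unfolding da_round_def by auto
    show "null P \<notin> da_round P R k" for k
      using null[of k] rejected_not_by_null[OF wf, of R k] unfolding da_round_def by auto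
    show "quota P s \<le> card (applicants P (da_round P R) s)" if "\<exists>k. s \<in> da_round P R k" for s
      using that full_before quota_le_applicants_da_round[OF wf] by blast
  qed
qed

lemma da_rejections_invariant:
  assumes "wf_problem P"
  shows "da_invariant P (da_rejections P)"
proof -
  have "da_invariant P ((da_round P ^^ n) (\<lambda>_. {}))" for n
  proof (induction n)
    case 0
    show ?case by (simp add: da_invariant_def)
  next
    case (Suc n)
    then show ?case by (simp add: da_round_invariant[OF assms])
  qed
  then show ?thesis unfolding da_rejections_def by blast
qed

definition over_demanded :: "('i, 's) problem \<Rightarrow> 's \<Rightarrow> bool" where
  "over_demanded P s \<longleftrightarrow> s \<in> schools P \<and> (\<exists>j\<in>students P. pref P j s (DA P j))"

lemma over_demanded_filled:
  assumes wf: "wf_problem P" and s: "over_demanded P s"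
  shows "quota P s \<le> card {k\<in>students P. DA P k = s}"
proof -
  let ?R = "da_rejections P"
  have inv: "da_invariant P ?R" using da_rejections_invariant[OF wf] .
  obtain j where j: "j \<in> students P" "pref P j s (DA P j)" "s \<in> schools P"
    using s unfolding over_demanded_def by blast
  have best: "DA P j \<in> schools P - ?R j \<and>
      (\<forall>t\<in>schools P - ?R j. t \<noteq> DA P j \<longrightarrow> pref P j (DA P j) t)"
    using choice_is_best[OF wf j(1)] inv unfolding da_invariant_def DA_def by blast
  have st: "strict_total_on (schools P) (pref P j)" using wf j unfolding wf_problem_def by blast
  have "s \<in> ?R j"
  proof (rule ccontr)
    assume "s \<notin> ?R j"
    moreover have "s \<noteq> DA P j" using j st unfolding strict_total_on_def by blast
    ultimately have "pref P j (DA P j) s" using j best by blast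
    then show False using j st best unfolding strict_total_on_def by blast
  qed
  then have "quota P s \<le> card (applicants P ?R s)"
    using inv unfolding da_invariant_def by blast
  then show ?thesis
    unfolding applicants_def DA_def .
qed

lemma null_not_over_demanded:
  assumes wf: "wf_problem P"
  shows "\<not> over_demanded P (null P)"
proof
  assume od: "over_demanded P (null P)"
  then obtain j where j: "j \<in> students P" "pref P j (null P) (DA P j)"
    unfolding over_demanded_def by blast
  have "card (students P) \<le> card {k\<in>students P. DA P k = null P}"
    using over_demanded_filled[OF wf od] wf unfolding wf_problem_def by linarith
  then have "{k\<in>students P. DA P k = null P} = students P"
    using wf unfolding wf_problem_def by (intro card_seteq) auto
  then have "DA P j = null P" using j by blast
  then show False using j wf unfolding wf_problem_def strict_total_on_def by auto
qed

lemma least_preferred_not_over_demanded: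
  assumes "i \<in> students P" "least_preferred P i (DA P i)" "under_demanded P s"
  shows "\<not> over_demanded P (DA P i)"
proof -
  have "s = DA P i"
    using assms unfolding least_preferred_def under_demanded_def by blast
  then show ?thesis
    using assms(3) unfolding under_demanded_def over_demanded_def by blast
qed

lemma weakly_dominating_fixes_not_over_demanded:
  assumes wf: "wf_problem P" and \<mu>: "is_matching P \<mu>" "weakly_dominates P \<mu> (DA P)"
    and i: "i \<in> students P" "\<not> over_demanded P (DA P i)"
  shows "\<mu> i = DA P i"
proof -
  have finI: "finite (students P)" and finS: "finite (schools P)"
    using wf unfolding wf_problem_def by auto
  define F where "F = {s. over_demanded P s}"
  have finF: "finite F" using finS unfolding F_def over_demanded_def by auto
  define moved where "moved = {j\<in>students P. \<mu> j \<noteq> DA P j}"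
  define D where "D = {j\<in>students P. DA P j \<in> F}"
  define E where "E = {j\<in>students P. \<mu> j \<in> F}"
  have "moved \<union> D \<subseteq> E"
  proof
    fix j assume j: "j \<in> moved \<union> D"
    show "j \<in> E"
    proof (cases "\<mu> j = DA P j")
      case True
      then show ?thesis using j unfolding moved_def D_def E_def by auto
    next
      case False
      then have "j \<in> students P" "pref P j (\<mu> j) (DA P j)" "\<mu> j \<in> schools P"
        using j \<mu> unfolding moved_def D_def weakly_dominates_def is_matching_def by auto
      then show ?thesis unfolding E_def F_def over_demanded_def by blast
    qed
  qed
  have "card E = (\<Sum>s\<in>F. card {j\<in>students P. \<mu> j = s})"
    unfolding E_def using card_preimage_eq_sum[OF finI finF] .
  also have "\<dots> \<le> (\<Sum>s\<in>F. quota P s)"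
    using \<mu>(1) unfolding is_matching_def F_def over_demanded_def by (intro sum_mono) auto
  also have "\<dots> \<le> (\<Sum>s\<in>F. card {j\<in>students P. DA P j = s})"
    using over_demanded_filled[OF wf] unfolding F_def by (intro sum_mono) auto
  also have "\<dots> = card D"
    unfolding D_def using card_preimage_eq_sum[OF finI finF] by simp
  finally have "card E \<le> card D" .
  moreover have "card (moved \<union> D) \<le> card E"
    using \<open>moved \<union> D \<subseteq> E\<close> finI unfolding E_def by (intro card_mono) auto
  ultimately have "D = moved \<union> D"
    using finI unfolding D_def moved_def by (intro card_seteq) auto
  then show ?thesis
    using i unfolding D_def moved_def F_def by blast
qed

theorem proposition2:
  fixes P :: "('i, 's) problem" and i :: 'i
  assumes "wf_problem P"
    and "i \<in> students P"
    and "(least_preferred P i (DA P i) \<and> (\<exists>s. under_demanded P s)) \<or> DA P i = null P"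
  shows "unimprovable P i"
proof -
  have "\<not> over_demanded P (DA P i)"
    using assms(3)
  proof
    assume "least_preferred P i (DA P i) \<and> (\<exists>s. under_demanded P s)"
    then show ?thesis
      using least_preferred_not_over_demanded[OF assms(2)] by blast
  next
    assume "DA P i = null P"
    then show ?thesis
      using null_not_over_demanded[OF assms(1)] by simp
  qed
  then show ?thesis
    unfolding unimprovable_def M_def pareto_efficient_def
    using assms(1,2) weakly_dominating_fixes_not_over_demanded by auto
qed

end
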